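(* In the setting of the context, there exist $\bar k_\Psi\in\mathbb N$ and $\alpha_\Psi>0$ such that for every integer $k\ge\bar k_\Psi$, $\|\Psi^{(k)}\|_F\le\alpha_\Psi\,\|H^{(k)}_O\|_F\,\|H^{(k)}\|_F$, where $H^{(k)}:=Z^{(k)}-Z_\star$.
   Context: $\mathbb S^n$: real symmetric matrices, trace inner product, Frobenius norm; $\Pi_{\mathbb S^n_+}$ the projection onto the PSD cone. SDP pair: min $\langle C,X\rangle$ s.t. $\mathcal AX=b$, $X\succeq0$ / max $b^\top y$ s.t. $\mathcal A^*y+S=C$, $S\succeq0$, with $C,A_i\in\mathbb S^n$, $\mathcal AX=(\langle A_i,X\rangle)_i$ surjective, $\mathcal A^*y=\sum y_iA_i$, and a nonempty set of KKT points (primal–dual feasible with $\langle X,S\rangle=0$). $\mathcal P=\mathcal A^*(\mathcal A\mathcal A^* )^{-1}\mathcal A$. One-step ADMM with $\sigma>0$: $Z^{(k+1)}=\mathcal P(-2\Pi_{\mathbb S^n_+}(Z^{(k)})+Z^{(k)})+\Pi_{\mathbb S^n_+}(Z^{(k)})+\mathcal A^*(\mathcal A\mathcal A^* )^{-1}b+\sigma\mathcal PC-\sigma C$. Assume $Z^{(k)}\to Z_\star=X_\star-\sigma S_\star$ with $(X_\star,y_\star,S_\star)$ a KKT point satisfying $\operatorname{rank}X_\star+\operatorname{rank}S_\star=n$. Then $Z_\star=Q_\star\operatorname{diag}(\lambda_1,\dots,\lambda_n)Q_\star^\top$ for an orthogonal $Q_\star$, $\lambda_1\ge\dots\ge\lambda_r>0>\lambda_{r+1}\ge\dots\ge\lambda_n$,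 $r=\operatorname{rank}X_\star$. $\Theta_{ij}=\lambda_j/(\lambda_j-\lambda_{i+r})$ ($i\in[n-r],j\in[r]$), $\Omega=\begin{pmatrix}E_r&\Theta^\top\\\Theta&0\end{pmatrix}$, $\mathcal D(H)=Q_\star(\Omega\circ(Q_\star^\top HQ_\star))Q_\star^\top$ ($\circ$ Hadamard). $\Psi^{(k)}:=(\mathrm{Id}-2\mathcal P)\big(\Pi_{\mathbb S^n_+}(Z^{(k)})-\Pi_{\mathbb S^n_+}(Z_\star)-\mathcal D(Z^{(k)}-Z_\star)\big)$. For $H\in\mathbb S^n$, $H_O\in\mathbb R^{(n-r)\times r}$ denotes the lower-left block of $Q_\star^\top HQ_\star=\begin{pmatrix}H_X&H_O^\top\\H_O&H_S\end{pmatrix}$. *)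

theory Defs
  imports "HOL-Analysis.Analysis"
begin

text \<open>Matrices are real^'n^'n. On this type the library inner product is the
trace inner product sum_ij A_ij B_ij and the library norm is the Frobenius norm.\<close>

definition sym_mat :: "real^'n^'n \<Rightarrow> bool" where
  "sym_mat X \<longleftrightarrow> transpose X = X"

definition psd_cone :: "(real^'n^'n) set" where
  "psd_cone = {X. sym_mat X \<and> (\<forall>x. 0 \<le> x \<bullet> (X *v x))}"

definition proj_psd :: "real^'n^'n \<Rightarrow> real^'n^'n" where
  "proj_psd Z = (THE X. X \<in> psd_cone \<and> (\<forall>Y\<in>psd_cone. dist Z X \<le> dist Z Y))"

definition Aop :: "('m \<Rightarrow> real^'n^'n) \<Rightarrow> real^'n^'n \<Rightarrow> real^'m" where
  "Aop A X = (\<chi> i. A i \<bullet> X)"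

definition Aadj :: "('m::finite \<Rightarrow> real^'n^'n) \<Rightarrow> real^'m \<Rightarrow> real^'n^'n" where
  "Aadj A y = (\<Sum>i\<in>UNIV. (y $ i) *\<^sub>R A i)"

definition AAadj :: "('m::finite \<Rightarrow> real^'n^'n) \<Rightarrow> real^'m^'m" where
  "AAadj A = (\<chi> i j. A i \<bullet> A j)"

definition Pop :: "('m::finite \<Rightarrow> real^'n^'n) \<Rightarrow> real^'n^'n \<Rightarrow> real^'n^'n" where
  "Pop A H = Aadj A (matrix_inv (AAadj A) *v Aop A H)"

definition admm_step :: "('m::finite \<Rightarrow> real^'n^'n) \<Rightarrow> real^'m \<Rightarrow> real^'n^'n \<Rightarrow> real
    \<Rightarrow> real^'n^'n \<Rightarrow> real^'n^'n" where
  "admm_step A b C \<sigma> Z =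
     Pop A (Z - 2 *\<^sub>R proj_psd Z) + proj_psd Z + Aadj A (matrix_inv (AAadj A) *v b)
     + \<sigma> *\<^sub>R Pop A C - \<sigma> *\<^sub>R C"

definition KKT :: "('m::finite \<Rightarrow> real^'n^'n) \<Rightarrow> real^'m \<Rightarrow> real^'n^'n
    \<Rightarrow> real^'n^'n \<Rightarrow> real^'m \<Rightarrow> real^'n^'n \<Rightarrow> bool" where
  "KKT A b C X y S \<longleftrightarrow> X \<in> psd_cone \<and> Aop A X = b \<and> S \<in> psd_cone
     \<and> Aadj A y + S = C \<and> X \<bullet> S = 0"

text \<open>Omega: indices with lam > 0 form the X-block (first r indices), indices with
lam < 0 form the S-block.\<close>
definition Omega :: "('n \<Rightarrow> real) \<Rightarrow> 'n \<Rightarrow> 'n \<Rightarrow> real" where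
  "Omega lam a b =
     (if 0 < lam a \<and> 0 < lam b then 1
      else if lam a < 0 \<and> 0 < lam b then lam b / (lam b - lam a)
      else if 0 < lam a \<and> lam b < 0 then lam a / (lam a - lam b)
      else 0)"

definition Dop :: "real^'n^'n \<Rightarrow> ('n \<Rightarrow> real) \<Rightarrow> real^'n^'n \<Rightarrow> real^'n^'n" where
  "Dop Q lam H = Q ** (\<chi> a b. Omega lam a b * (transpose Q ** H ** Q) $ a $ b) ** transpose Q"

definition HO_norm :: "real^'n^'n \<Rightarrow> ('n \<Rightarrow> real) \<Rightarrow> real^'n^'n \<Rightarrow> real" where
  "HO_norm Q lam H =
     sqrt (\<Sum>a\<in>{a. lam a < 0}. \<Sum>b\<in>{b. 0 < lam b}. ((transpose Q ** H ** Q) $ a $ b)\<^sup>2)"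

definition diag_mat :: "('n \<Rightarrow> real) \<Rightarrow> real^'n^'n" where
  "diag_mat lam = (\<chi> i j. if i = j then lam i else 0)"

end

(* In the eigenbasis of Z_star = Q diag(lam) Q^T, let X, Y and H be the conjugates of Pi(Z),
   Pi(Z) - Z and Z - Z_star. For symmetric Z the projection is complementary, XY = 0, and
   X - Y = diag(lam) + H. Split the indices by the sign of lam; by strict complementarity no
   eigenvalue vanishes. Each block of XY = 0 is then an equation of Sylvester type
   T Lambda+ + |Lambda-| T = (terms quadratic in the perturbation), whose operator is bounded
   below by min |lam i|. So for small H the off-diagonal block of Y is O(|H_O|), the blocks
   Y_PP and X_NN are O(|H_O| |H|), and the off-diagonal block of X equals Theta o H_O up to
   O(|H_O| |H|). Together these bound Pi(Z) - Pi(Z_star) - D(Z - Z_star). The iterates are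
   symmetric and converge to Z_star, and I - 2P is bounded, which gives the theorem. *)
theory Submission
  imports Defs
begin

section \<open>Matrix algebra and the Frobenius norm\<close>

lemma matrix_matrix_mult_component: "((A::real^'n^'n) ** B) $ i $ j = (\<Sum>k\<in>UNIV. A$i$k * B$k$j)"
  by (simp add: matrix_matrix_mult_def)

lemma matrix_add_rdistrib: "((A::real^'n^'n) + B) ** C = A ** C + B ** C"
  by (simp add: vec_eq_iff matrix_matrix_mult_component distrib_right sum.distrib)

lemma matrix_diff_rdistrib: "((A::real^'n^'n) - B) ** C = A ** C - B ** C"
  by (simp add: vec_eq_iff matrix_matrix_mult_component left_diff_distrib sum_subtractf)

lemma matrix_diff_ldistrib: "(C::real^'n^'n) ** (A - B) = C ** A - C ** B"
  by (simp add: vec_eq_iff matrix_matrix_mult_component right_diff_distrib sum_subtractf)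

lemmas matrix_distribs =
  matrix_add_ldistrib matrix_add_rdistrib matrix_diff_ldistrib matrix_diff_rdistrib

lemma matrix_mult_left_eq: "A ** B = (C::real^'n^'n) \<Longrightarrow> M ** A ** B = M ** C"
  by (simp add: matrix_mul_assoc[symmetric])

lemma transpose_add: "transpose ((A::real^'n^'n) + B) = transpose A + transpose B"
  by (simp add: vec_eq_iff transpose_def)

lemma transpose_diff: "transpose ((A::real^'n^'n) - B) = transpose A - transpose B"
  by (simp add: vec_eq_iff transpose_def)

lemma transpose_zero: "transpose (0::real^'n^'n) = 0"
  by (simp add: vec_eq_iff transpose_def)

lemma transpose_component: "transpose (A::real^'n^'n) $ i $ j = A $ j $ i"
  by (simp add: transpose_def)

lemma inner_matrix: "(A::real^'n^'n) \<bullet> B = (\<Sum>i\<in>UNIV. \<Sum>j\<in>UNIV. A$i$j * B$i$j)"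
  by (simp add: inner_vec_def)

lemma inner_transpose_transpose: "transpose (A::real^'n^'n) \<bullet> transpose B = A \<bullet> B"
  by (simp add: inner_matrix transpose_def) (rule sum.swap)

lemma inner_matrix_trace: "(A::real^'n^'n) \<bullet> B = trace (transpose A ** B)"
  by (simp add: inner_matrix trace_def matrix_matrix_mult_component transpose_def) (rule sum.swap)

lemma power2_norm_matrix: "(norm (A::real^'n^'n))\<^sup>2 = (\<Sum>i\<in>UNIV. \<Sum>j\<in>UNIV. (A$i$j)\<^sup>2)"
  by (simp only: power2_norm_eq_inner inner_matrix) (simp add: power2_eq_square)

lemma power2_norm_vector: "(norm (v::real^'n))\<^sup>2 = (\<Sum>j\<in>UNIV. (v$j)\<^sup>2)"
  by (simp only: power2_norm_eq_inner) (simp add: inner_vec_def power2_eq_square)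

lemma norm_matrix_le_entrywise:
  assumes "\<And>i j. c * \<bar>(A::real^'n^'n)$i$j\<bar> \<le> \<bar>B$i$j\<bar>" "0 \<le> c"
  shows "c * norm A \<le> norm B"
proof -
  have "(c * norm A)\<^sup>2 = (\<Sum>i\<in>UNIV. \<Sum>j\<in>UNIV. (c * A$i$j)\<^sup>2)"
    by (simp add: power_mult_distrib power2_norm_matrix sum_distrib_left)
  also have "\<dots> \<le> (\<Sum>i\<in>UNIV. \<Sum>j\<in>UNIV. (B$i$j)\<^sup>2)"
  proof (intro sum_mono)
    fix i j
    have "\<bar>c * A$i$j\<bar> \<le> \<bar>B$i$j\<bar>" using assms by (simp add: abs_mult)
    then show "(c * A$i$j)\<^sup>2 \<le> (B$i$j)\<^sup>2" by (simp add: abs_le_square_iff)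
  qed
  also have "\<dots> = (norm B)\<^sup>2" by (simp add: power2_norm_matrix)
  finally show ?thesis by (rule power2_le_imp_le) simp
qed

lemma norm_transpose: "norm (transpose (A::real^'n^'n)) = norm A"
proof -
  have "(norm (transpose A))\<^sup>2 = (norm A)\<^sup>2"
    by (simp add: power2_norm_matrix transpose_def) (rule sum.swap)
  then show ?thesis by simp
qed

lemma norm_matrix_mult_le: "norm ((A::real^'n^'n) ** (B::real^'n^'n)) \<le> norm A * norm B"
proof -
  have "(norm (A ** B))\<^sup>2 = (\<Sum>i\<in>UNIV. \<Sum>j\<in>UNIV. ((A$i) \<bullet> column j B)\<^sup>2)"
    by (simp only: power2_norm_matrix) (simp add: matrix_matrix_mult_component inner_vec_def column_def)
  also have "\<dots> \<le> (\<Sum>i\<in>UNIV. \<Sum>j\<in>UNIV. (norm (A$i))\<^sup>2 * (norm (column j B))\<^sup>2)"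
  proof (intro sum_mono)
    fix i j
    have "\<bar>(A$i) \<bullet> column j B\<bar> \<le> norm (A$i) * norm (column j B)"
      by (rule Cauchy_Schwarz_ineq2)
    then show "((A$i) \<bullet> column j B)\<^sup>2 \<le> (norm (A$i))\<^sup>2 * (norm (column j B))\<^sup>2"
      by (metis abs_ge_zero power2_abs power_mono power_mult_distrib)
  qed
  also have "\<dots> = (\<Sum>i\<in>UNIV. (norm (A$i))\<^sup>2) * (\<Sum>j\<in>UNIV. (norm (column j B))\<^sup>2)"
    by (simp add: sum_product)
  also have "(\<Sum>i\<in>UNIV. (norm (A$i))\<^sup>2) = (norm A)\<^sup>2"
    by (simp only: power2_norm_matrix power2_norm_vector)
  also have "(\<Sum>j\<in>UNIV. (norm (column j B))\<^sup>2) = (norm B)\<^sup>2"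
    by (simp only: power2_norm_matrix power2_norm_vector) (simp add: column_def, rule sum.swap)
  finally have "(norm (A ** B))\<^sup>2 \<le> (norm A * norm B)\<^sup>2" by (simp add: power_mult_distrib)
  then show ?thesis by (rule power2_le_imp_le) simp
qed

lemma norm_matrix_mult_le_mult:
  assumes "norm (A::real^'n^'n) \<le> a" "norm (B::real^'n^'n) \<le> b"
  shows "norm (A ** B) \<le> a * b"
proof -
  have "0 \<le> a" using assms(1) norm_ge_zero order_trans by blast
  then show ?thesis
    using norm_matrix_mult_le[of A B] mult_mono[OF assms] by force
qed

lemma norm_orthogonal_congruence:
  assumes "orthogonal_matrix Q"
  shows "norm (transpose Q ** M ** Q) = norm (M::real^'n^'n)"
proof -
  have "trace (transpose Q ** transpose M ** M ** Q) = trace (transpose M ** M ** Q ** transpose Q)"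
    by (metis trace_mul_sym matrix_mul_assoc)
  then have "(norm (transpose Q ** M ** Q))\<^sup>2 = (norm M)\<^sup>2"
    using assms
    by (simp add: power2_norm_eq_inner inner_matrix_trace matrix_transpose_mul matrix_mul_assoc
        orthogonal_matrix_def)
       (simp add: matrix_mul_assoc[symmetric])
  then show ?thesis by simp
qed

lemma norm_orthogonal_congruence':
  "orthogonal_matrix Q \<Longrightarrow> norm (Q ** M ** transpose Q) = norm (M::real^'n^'n)"
  using norm_orthogonal_congruence[of "transpose Q"] by simp

lemma inner_matrix_congruence:
  "((Q::real^'n^'n) ** A ** transpose Q) \<bullet> B = A \<bullet> (transpose Q ** B ** Q)"
proof -
  have "trace (Q ** transpose A ** transpose Q ** B) = trace (transpose A ** transpose Q ** B ** Q)"
    by (metis trace_mul_sym matrix_mul_assoc)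
  then show ?thesis
    by (simp add: inner_matrix_trace matrix_transpose_mul matrix_mul_assoc)
qed

lemma inner_matrix_vector_transpose: "x \<bullet> ((A::real^'m^'n) *v y) = (transpose A *v x) \<bullet> y"
  by (simp add: dot_lmul_matrix)

section \<open>The projection onto the PSD cone\<close>

lemma psd_cone_transpose: "X \<in> psd_cone \<Longrightarrow> transpose X = X"
  by (simp add: psd_cone_def sym_mat_def)

lemma psd_cone_nonneg: "X \<in> psd_cone \<Longrightarrow> 0 \<le> x \<bullet> (X *v x)"
  by (simp add: psd_cone_def)

lemma psd_coneI: "transpose X = X \<Longrightarrow> (\<And>x. 0 \<le> x \<bullet> (X *v x)) \<Longrightarrow> X \<in> psd_cone"
  by (simp add: psd_cone_def sym_mat_def)

lemma psd_cone_congruence: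
  assumes "X \<in> psd_cone"
  shows "transpose S ** X ** S \<in> psd_cone"
proof (rule psd_coneI)
  show "transpose (transpose S ** X ** S) = transpose S ** X ** S"
    using assms by (simp add: matrix_transpose_mul psd_cone_transpose matrix_mul_assoc)
  fix x
  have "x \<bullet> ((transpose S ** X ** S) *v x) = x \<bullet> (transpose S *v (X *v (S *v x)))"
    by (simp only: matrix_vector_mul_assoc matrix_mul_assoc)
  also have "\<dots> = (transpose (transpose S) *v x) \<bullet> (X *v (S *v x))"
    by (rule inner_matrix_vector_transpose)
  finally show "0 \<le> x \<bullet> ((transpose S ** X ** S) *v x)"
    using psd_cone_nonneg[OF assms] by simp
qed

lemma closed_psd_cone: "closed (psd_cone :: (real^'n^'n) set)"
proof -
  have eq: "(psd_cone :: (real^'n^'n) set) =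
      {X. transpose X = X} \<inter> (\<Inter>x. {X. 0 \<le> x \<bullet> (X *v x)})"
    by (auto simp: psd_cone_def sym_mat_def)
  have "linear (transpose :: real^'n^'n \<Rightarrow> real^'n^'n)"
    by (rule linearI) (simp_all add: transpose_add transpose_scalar)
  then have "continuous_on UNIV (transpose :: real^'n^'n \<Rightarrow> real^'n^'n)"
    by (simp add: linear_continuous_on linear_conv_bounded_linear[symmetric])
  then have "closed {X::real^'n^'n. transpose X = X}"
    using closed_Collect_eq[OF _ continuous_on_id] by simp
  moreover have "linear (\<lambda>X::real^'n^'n. x \<bullet> (X *v x))" for x
    by (rule linearI)
       (simp_all add: matrix_vector_mult_add_rdistrib inner_add_right flip: scaleR_matrix_vector_assoc)
  then have cont: "continuous_on UNIV (\<lambda>X::real^'n^'n. x \<bullet> (X *v x))" for x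
    by (simp add: linear_continuous_on linear_conv_bounded_linear[symmetric])
  have "closed {X::real^'n^'n. 0 \<le> x \<bullet> (X *v x)}" for x
    using closed_Collect_le[OF continuous_on_const cont] by simp
  ultimately show ?thesis unfolding eq by auto
qed

lemma convex_psd_cone: "convex (psd_cone :: (real^'n^'n) set)"
proof (rule convexI)
  fix X Y :: "real^'n^'n" and u v :: real
  assume XY: "X \<in> psd_cone" "Y \<in> psd_cone" and uv: "0 \<le> u" "0 \<le> v" "u + v = 1"
  show "u *\<^sub>R X + v *\<^sub>R Y \<in> psd_cone"
  proof (rule psd_coneI)
    show "transpose (u *\<^sub>R X + v *\<^sub>R Y) = u *\<^sub>R X + v *\<^sub>R Y"
      using XY by (simp add: transpose_add transpose_scalar psd_cone_transpose)
    fix x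
    have "x \<bullet> ((u *\<^sub>R X + v *\<^sub>R Y) *v x) = u * (x \<bullet> (X *v x)) + v * (x \<bullet> (Y *v x))"
      by (simp add: matrix_vector_mult_add_rdistrib inner_add_right
        flip: scaleR_matrix_vector_assoc)
    then show "0 \<le> x \<bullet> ((u *\<^sub>R X + v *\<^sub>R Y) *v x)"
      using XY uv psd_cone_nonneg[of X x] psd_cone_nonneg[of Y x] by simp
  qed
qed

lemma zero_in_psd_cone: "0 \<in> psd_cone"
  by (simp add: psd_cone_def sym_mat_def vec_eq_iff transpose_def)

lemma proj_psd_eq_closest_point: "proj_psd Z = closest_point psd_cone Z"
  unfolding proj_psd_def
proof (rule the_equality)
  show "closest_point psd_cone Z \<in> psd_cone \<and>
        (\<forall>Y\<in>psd_cone. dist Z (closest_point psd_cone Z) \<le> dist Z Y)"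
    using closest_point_exists[OF closed_psd_cone] zero_in_psd_cone by blast
  fix X assume "X \<in> psd_cone \<and> (\<forall>Y\<in>psd_cone. dist Z X \<le> dist Z Y)"
  then show "X = closest_point psd_cone Z"
    using closest_point_unique[OF convex_psd_cone closed_psd_cone] by blast
qed

lemma proj_psd_in_cone: "proj_psd Z \<in> psd_cone"
  unfolding proj_psd_eq_closest_point
  using closest_point_exists[OF closed_psd_cone] zero_in_psd_cone by blast

lemma proj_psd_variational_ineq:
  "W \<in> psd_cone \<Longrightarrow> (Z - proj_psd Z) \<bullet> (W - proj_psd Z) \<le> 0"
  unfolding proj_psd_eq_closest_point by (rule closest_point_dot[OF convex_psd_cone closed_psd_cone])

lemma proj_psd_lipschitz: "norm (proj_psd Z1 - proj_psd Z2) \<le> norm (Z1 - Z2)"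
  unfolding proj_psd_eq_closest_point
  using closest_point_lipschitz[OF convex_psd_cone closed_psd_cone, of Z1 Z2] zero_in_psd_cone
  by (auto simp: dist_norm)

lemma proj_psd_eqI:
  assumes "X \<in> psd_cone" "\<And>W. W \<in> psd_cone \<Longrightarrow> (Z - X) \<bullet> (W - X) \<le> 0"
  shows "proj_psd Z = X"
proof -
  have "dist Z X \<le> dist Z W" if "W \<in> psd_cone" for W
  proof -
    have "(dist Z W)\<^sup>2 = (norm (Z - X))\<^sup>2 + (norm (W - X))\<^sup>2 - 2 * ((Z - X) \<bullet> (W - X))"
      by (simp add: dist_norm power2_norm_eq_inner inner_diff_left inner_diff_right inner_commute)
    also have "\<dots> \<ge> (dist Z X)\<^sup>2"
      unfolding dist_norm using assms(2)[OF that] zero_le_power2[of "norm (W - X)"] by linarith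
    finally show ?thesis by (rule power2_le_imp_le) simp
  qed
  then show ?thesis
    unfolding proj_psd_eq_closest_point
    using closest_point_unique[OF convex_psd_cone closed_psd_cone assms(1)] by metis
qed

lemma nonpos_if_dominated_by_square:
  fixes a c :: real
  assumes "\<And>s. 0 < s \<Longrightarrow> s * a \<le> s\<^sup>2 * c"
  shows "a \<le> 0"
proof (rule ccontr)
  assume "\<not> a \<le> 0"
  define s where "s = a / (\<bar>c\<bar> + 1)"
  have s: "0 < s" "s * \<bar>c\<bar> < a"
    using \<open>\<not> a \<le> 0\<close> by (auto simp: s_def field_simps)
  have "s\<^sup>2 * c \<le> s * (s * \<bar>c\<bar>)" using s by (simp add: power2_eq_square mult_left_mono)
  also have "\<dots> < s * a" using s by simp
  finally show False using assms[OF s(1)] by simp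
qed

lemma psd_cone_null_vector:
  assumes "X \<in> psd_cone" "x \<bullet> (X *v x) = 0"
  shows "X *v x = 0"
proof -
  let ?y = "X *v x"
  have "s * (2 * (?y \<bullet> ?y)) \<le> s\<^sup>2 * (?y \<bullet> (X *v ?y))" for s
  proof -
    have "0 \<le> (x - s *\<^sub>R ?y) \<bullet> (X *v (x - s *\<^sub>R ?y))" using assms(1) by (rule psd_cone_nonneg)
    also have "\<dots> = x \<bullet> (X *v x) - s * (x \<bullet> (X *v ?y)) - s * (?y \<bullet> ?y) + s\<^sup>2 * (?y \<bullet> (X *v ?y))"
      by (simp add: matrix_vector_mult_diff_distrib matrix_vector_mult_scaleR inner_diff_left
          inner_diff_right power2_eq_square algebra_simps)
    also have "x \<bullet> (X *v ?y) = ?y \<bullet> ?y"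
      by (simp only: inner_matrix_vector_transpose psd_cone_transpose[OF assms(1)])
    finally show ?thesis using assms(2) by simp
  qed
  then have "2 * (?y \<bullet> ?y) \<le> 0" by (intro nonpos_if_dominated_by_square) auto
  then have "?y \<bullet> ?y = 0" using inner_ge_zero[of ?y] by linarith
  then show ?thesis by simp
qed

lemma inner_matrix_mult_columns:
  "(Y::real^'n^'n) \<bullet> (X ** Y) = (\<Sum>j\<in>UNIV. column j Y \<bullet> (X *v column j Y))"
  by (simp add: inner_matrix inner_vec_def matrix_matrix_mult_component column_def
      matrix_vector_mult_def sum_distrib_left) (rule sum.swap)

text \<open>Testing the variational inequality with the PSD matrices \<open>(I - s Y) X (I - s Y)\<close>,
  \<open>s > 0\<close>, shows \<open>\<langle>Y, XY\<rangle> \<le> 0\<close>; as \<open>X\<close> is PSD, this forces \<open>XY = 0\<close>.\<close>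
lemma proj_psd_complementarity:
  assumes "transpose Z = Z"
  shows "proj_psd Z ** (proj_psd Z - Z) = 0"
proof -
  define X where "X = proj_psd Z"
  define Y where "Y = X - Z"
  have X: "X \<in> psd_cone" unfolding X_def by (rule proj_psd_in_cone)
  have sX: "transpose X = X" using X by (rule psd_cone_transpose)
  have sY: "transpose Y = Y" unfolding Y_def by (simp add: transpose_diff sX assms)
  have YXY: "Y \<bullet> (Y ** X) = Y \<bullet> (X ** Y)"
    using inner_transpose_transpose[of Y "Y ** X"] by (simp add: matrix_transpose_mul sX sY)
  have "s * (2 * (Y \<bullet> (X ** Y))) \<le> s\<^sup>2 * (Y \<bullet> (Y ** X ** Y))" if "0 < s" for s
  proof -
    define S where "S = mat 1 - s *\<^sub>R Y"
    have sS: "transpose S = S" unfolding S_def by (simp add: transpose_diff transpose_scalar sY)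
    have "S ** X ** S \<in> psd_cone" using psd_cone_congruence[OF X, of S] by (simp add: sS)
    then have "0 \<le> Y \<bullet> (S ** X ** S - X)"
      using proj_psd_variational_ineq[of "S ** X ** S" Z] by (simp add: X_def Y_def inner_diff_left)
    also have "S ** X = X - s *\<^sub>R (Y ** X)"
      by (simp add: S_def matrix_diff_rdistrib scalar_matrix_assoc[symmetric])
    also have "(X - s *\<^sub>R (Y ** X)) ** S
        = X - s *\<^sub>R (X ** Y) - s *\<^sub>R (Y ** X) + s\<^sup>2 *\<^sub>R (Y ** X ** Y)"
      by (simp add: S_def matrix_diff_rdistrib matrix_diff_ldistrib matrix_scalar_ac
          scalar_matrix_assoc[symmetric] scaleR_diff_right power2_eq_square)
    finally show ?thesis by (simp add: inner_diff_right inner_add_right YXY)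
  qed
  then have "2 * (Y \<bullet> (X ** Y)) \<le> 0" by (rule nonpos_if_dominated_by_square)
  then have "Y \<bullet> (X ** Y) \<le> 0" by simp
  moreover have nonneg: "0 \<le> column j Y \<bullet> (X *v column j Y)" for j
    using psd_cone_nonneg[OF X] by blast
  ultimately have "(\<Sum>j\<in>UNIV. column j Y \<bullet> (X *v column j Y)) = 0"
    unfolding inner_matrix_mult_columns by (meson order_antisym sum_nonneg)
  then have "column j Y \<bullet> (X *v column j Y) = 0" for j
    using sum_nonneg_eq_0_iff[of UNIV "\<lambda>j. column j Y \<bullet> (X *v column j Y)"] nonneg by auto
  then have "X *v column j Y = 0" for j using psd_cone_null_vector[OF X] by blast
  then show ?thesis
    by (simp add: vec_eq_iff matrix_matrix_mult_component matrix_vector_mult_def column_def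
        flip: X_def Y_def)
qed

section \<open>Diagonal matrices and the sign splitting of an eigenvalue vector\<close>

lemma diag_mat_component: "diag_mat d $ i $ j = (if i = j then d i else 0)"
  by (simp add: diag_mat_def)

lemma diag_mat_mult_component: "(diag_mat d ** (M::real^'n^'n)) $ i $ j = d i * M$i$j"
  by (simp add: matrix_matrix_mult_component diag_mat_def if_distrib if_distribR sum.delta
      cong: if_cong)

lemma mult_diag_mat_component: "((M::real^'n^'n) ** diag_mat d) $ i $ j = M$i$j * d j"
  by (simp add: matrix_matrix_mult_component diag_mat_def if_distrib if_distribR sum.delta'
      cong: if_cong)

lemma transpose_diag_mat: "transpose (diag_mat d) = diag_mat d"
  by (simp add: vec_eq_iff transpose_def diag_mat_def)

lemma diag_mat_zero: "diag_mat (\<lambda>_. 0) = (0::real^'n^'n)"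
  by (simp add: vec_eq_iff diag_mat_component)

lemma diag_mat_quadratic_form: "v \<bullet> (diag_mat d *v v) = (\<Sum>i\<in>UNIV. d i * (v$i)\<^sup>2)"
  by (simp add: inner_vec_def matrix_vector_mult_def diag_mat_component if_distrib if_distribR
      sum.delta cong: if_cong) (simp add: power2_eq_square mult_ac)

lemma inner_diag_mat: "diag_mat d \<bullet> (M::real^'n^'n) = (\<Sum>i\<in>UNIV. d i * M$i$i)"
  by (simp add: inner_matrix diag_mat_component if_distrib if_distribR sum.delta cong: if_cong)

lemma norm_diag_mat_congruence_le:
  assumes "\<And>i. \<bar>a i\<bar> \<le> 1" "\<And>j. \<bar>c j\<bar> \<le> 1"
  shows "norm (diag_mat a ** (M::real^'n^'n) ** diag_mat c) \<le> norm M"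
proof -
  have "\<bar>a i\<bar> * \<bar>M$i$j\<bar> * \<bar>c j\<bar> \<le> 1 * \<bar>M$i$j\<bar> * 1" for i j
    using assms by (intro mult_mono) auto
  then show ?thesis
    using norm_matrix_le_entrywise[of 1 "diag_mat a ** M ** diag_mat c" M]
    by (simp add: mult_diag_mat_component diag_mat_mult_component abs_mult)
qed

lemma norm_sylvester_lower_bound:
  assumes "\<And>i j. (T::real^'n^'n)$i$j \<noteq> 0 \<Longrightarrow> m \<le> \<bar>e j + d i\<bar>" "0 \<le> m"
  shows "m * norm T \<le> norm (T ** diag_mat e + diag_mat d ** T)"
proof (rule norm_matrix_le_entrywise[OF _ assms(2)])
  fix i j
  have "(T ** diag_mat e + diag_mat d ** T)$i$j = T$i$j * (e j + d i)"
    by (simp add: mult_diag_mat_component diag_mat_mult_component algebra_simps)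
  then show "m * \<bar>T$i$j\<bar> \<le> \<bar>(T ** diag_mat e + diag_mat d ** T)$i$j\<bar>"
    using assms(1)[of i j] by (cases "T$i$j = 0") (auto simp: abs_mult mult.commute mult_right_mono)
qed

text \<open>In the eigenbasis, \<open>Ipos\<close> and \<open>Ineg\<close> project onto the indices of the \<open>X\<close>-block and
  of the \<open>S\<close>-block of the paper.\<close>

definition Ipos :: "('n \<Rightarrow> real) \<Rightarrow> real^'n^'n" where
  "Ipos lam = diag_mat (\<lambda>i. if 0 < lam i then 1 else 0)"

definition Ineg :: "('n \<Rightarrow> real) \<Rightarrow> real^'n^'n" where
  "Ineg lam = diag_mat (\<lambda>i. if lam i < 0 then 1 else 0)"

definition Lpos :: "('n \<Rightarrow> real) \<Rightarrow> real^'n^'n" where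
  "Lpos lam = diag_mat (\<lambda>i. if 0 < lam i then lam i else 0)"

definition Lneg :: "('n \<Rightarrow> real) \<Rightarrow> real^'n^'n" where
  "Lneg lam = diag_mat (\<lambda>i. if lam i < 0 then - lam i else 0)"

lemmas sign_split_defs = Ipos_def Ineg_def Lpos_def Lneg_def

lemma sign_split_mult:
  "Ipos lam ** Ipos lam = Ipos lam" "Ineg lam ** Ineg lam = Ineg lam"
  "Ipos lam ** Ineg lam = 0" "Ineg lam ** Ipos lam = 0"
  "Ipos lam ** Lpos lam = Lpos lam" "Lpos lam ** Ipos lam = Lpos lam"
  "Ineg lam ** Lpos lam = 0" "Lpos lam ** Ineg lam = 0"
  "Ineg lam ** Lneg lam = Lneg lam" "Lneg lam ** Ineg lam = Lneg lam"
  "Ipos lam ** Lneg lam = 0" "Lneg lam ** Ipos lam = 0"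
  by (simp_all add: vec_eq_iff sign_split_defs diag_mat_mult_component diag_mat_component)

lemmas sign_split_mult_left = sign_split_mult[THEN matrix_mult_left_eq]

lemma transpose_sign_split:
  "transpose (Ipos lam) = Ipos lam" "transpose (Ineg lam) = Ineg lam"
  "transpose (Lpos lam) = Lpos lam" "transpose (Lneg lam) = Lneg lam"
  by (simp_all add: sign_split_defs transpose_diag_mat)

lemma Ipos_plus_Ineg: "(\<And>i. lam i \<noteq> 0) \<Longrightarrow> Ipos lam + Ineg lam = mat 1"
  by (auto simp: vec_eq_iff sign_split_defs diag_mat_component mat_def)

lemma diag_mat_eq_Lpos_minus_Lneg: "diag_mat lam = Lpos lam - Lneg lam"
  by (auto simp: vec_eq_iff sign_split_defs diag_mat_component)

lemma sign_block_component:
  "(Ipos lam ** M ** Ipos lam) $ i $ j = (if 0 < lam i \<and> 0 < lam j then M$i$j else 0)"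
  "(Ineg lam ** M ** Ipos lam) $ i $ j = (if lam i < 0 \<and> 0 < lam j then M$i$j else 0)"
  "(Ineg lam ** M ** Ineg lam) $ i $ j = (if lam i < 0 \<and> lam j < 0 then M$i$j else 0)"
  by (simp_all add: Ipos_def Ineg_def mult_diag_mat_component diag_mat_mult_component)

lemma norm_sign_block_le:
  assumes "A \<in> {Ipos lam, Ineg lam}" "C \<in> {Ipos lam, Ineg lam}"
  shows "norm (A ** M ** C) \<le> norm M"
  using assms by (auto simp: Ipos_def Ineg_def intro!: norm_diag_mat_congruence_le)

section \<open>Second-order expansion of the projection in the eigenbasis\<close>

definition Omega_hadamard :: "('n \<Rightarrow> real) \<Rightarrow> real^'n^'n \<Rightarrow> real^'n^'n" where
  "Omega_hadamard lam H = (\<chi> a b. Omega lam a b * H$a$b)"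

definition Theta_hadamard :: "('n \<Rightarrow> real) \<Rightarrow> real^'n^'n \<Rightarrow> real^'n^'n" where
  "Theta_hadamard lam H =
     (\<chi> i j. if lam i < 0 \<and> 0 < lam j then lam j / (lam j - lam i) * H$i$j else 0)"

text \<open>This Sylvester equation is where the weights \<open>\<Theta>\<close> come from.\<close>
lemma Theta_hadamard_sylvester:
  "Ineg lam ** H ** Ipos lam ** Lpos lam
     = Theta_hadamard lam H ** Lpos lam + Lneg lam ** Theta_hadamard lam H"
proof -
  have "(Ineg lam ** H ** Ipos lam ** Lpos lam) $ i $ j
      = (Theta_hadamard lam H ** Lpos lam + Lneg lam ** Theta_hadamard lam H) $ i $ j" for i j
  proof (cases "lam i < 0 \<and> 0 < lam j")
    case True
    then have "lam j - lam i \<noteq> 0" by simp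
    then have "lam j / (lam j - lam i) * H$i$j * lam j + - lam i * (lam j / (lam j - lam i) * H$i$j)
        = H$i$j * lam j"
      by (simp add: divide_simps) (simp add: algebra_simps)
    with True show ?thesis
      by (simp add: sign_split_defs Theta_hadamard_def mult_diag_mat_component
          diag_mat_mult_component)
  qed (auto simp: sign_split_defs Theta_hadamard_def mult_diag_mat_component
      diag_mat_mult_component)
  then show ?thesis by (simp add: vec_eq_iff)
qed

lemma block_product_zero:
  fixes A C M M' P N :: "real^'n^'n"
  assumes "M ** M' = 0" "P + N = mat 1" "P ** P = P" "N ** N = N"
  shows "(A ** M ** P) ** (P ** M' ** C) + (A ** M ** N) ** (N ** M' ** C) = 0"
proof -
  have "(A ** M ** P) ** (P ** M' ** C) = A ** M ** P ** M' ** C"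
    using assms(3) by (metis matrix_mul_assoc)
  moreover have "(A ** M ** N) ** (N ** M' ** C) = A ** M ** N ** M' ** C"
    using assms(4) by (metis matrix_mul_assoc)
  moreover have "A ** M ** P ** M' ** C + A ** M ** N ** M' ** C = A ** M ** (P + N) ** M' ** C"
    by (simp add: matrix_distribs)
  ultimately show ?thesis using assms(1,2) by (simp add: matrix_mul_assoc[symmetric])
qed

definition kappa :: "('n::finite \<Rightarrow> real) \<Rightarrow> real \<Rightarrow> real" where
  "kappa lam m = 2 * (norm (Lneg lam) + m) / m"

text \<open>\<open>X\<close> and \<open>Y\<close> stand for \<open>Q\<^sup>T \<Pi>(Z) Q\<close> and \<open>Q\<^sup>T (\<Pi>(Z) - Z) Q\<close>,
  and \<open>H\<close> for \<open>Q\<^sup>T (Z - Z\<^sub>\<star>) Q\<close>.\<close>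
locale psd_split_perturbation =
  fixes lam :: "'n::finite \<Rightarrow> real" and m :: real and X Y H :: "real^'n^'n"
  assumes lam_nonzero: "\<And>i. lam i \<noteq> 0"
    and m_pos: "0 < m" and m_le_abs_lam: "\<And>i. m \<le> \<bar>lam i\<bar>"
    and sym_X: "transpose X = X" and sym_Y: "transpose Y = Y"
    and complementary: "X ** Y = 0"
    and X_minus_Y: "X - Y = diag_mat lam + H"
    and X_near_Lpos: "norm (X - Lpos lam) \<le> norm H"
    and H_small: "norm H \<le> m / 8"
begin

abbreviation "P \<equiv> Ipos lam"
abbreviation "N \<equiv> Ineg lam"
abbreviation "HO \<equiv> N ** H ** P"
abbreviation "YNP \<equiv> N ** Y ** P"
abbreviation "XNP \<equiv> N ** X ** P"
abbreviation "E \<equiv> P ** (X - Lpos lam) ** P"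
abbreviation "F \<equiv> N ** (Y - Lneg lam) ** N"
abbreviation "\<kappa> \<equiv> kappa lam m"

lemma kappa_nonneg: "0 \<le> \<kappa>"
  using m_pos by (simp add: kappa_def)

lemma P_plus_N: "P + N = mat 1"
  using Ipos_plus_Ineg lam_nonzero by blast

lemma block_zero_XY:
  "((A::real^'n^'n) ** X ** P) ** (P ** Y ** C) + (A ** X ** N) ** (N ** Y ** (C::real^'n^'n)) = 0"
  by (rule block_product_zero[OF complementary P_plus_N sign_split_mult(1,2)])

lemma block_zero_YX:
  "((A::real^'n^'n) ** Y ** P) ** (P ** X ** C) + (A ** Y ** N) ** (N ** X ** (C::real^'n^'n)) = 0"
proof -
  have "Y ** X = 0"
    using arg_cong[OF complementary, of transpose]
    by (simp add: matrix_transpose_mul transpose_zero sym_X sym_Y)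
  then show ?thesis by (rule block_product_zero[OF _ P_plus_N sign_split_mult(1,2)])
qed

lemma Y_eq: "Y = X - Lpos lam + Lneg lam - H"
  using X_minus_Y unfolding diag_mat_eq_Lpos_minus_Lneg by (simp add: algebra_simps)

lemma norm_E_le: "norm E \<le> norm H"
  using norm_sign_block_le[of P lam P "X - Lpos lam"] X_near_Lpos by simp

lemma norm_F_le: "norm F \<le> 2 * norm H"
proof -
  have "norm (Y - Lneg lam) \<le> norm (X - Lpos lam) + norm H"
    using norm_triangle_ineq4[of "X - Lpos lam" H] by (simp add: Y_eq algebra_simps)
  then show ?thesis
    using norm_sign_block_le[of N lam N "Y - Lneg lam"] X_near_Lpos by simp
qed

lemma norm_HO_le: "norm HO \<le> norm H"
  using norm_sign_block_le[of N lam P H] by simp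

lemma block_PXP: "P ** X ** P = Lpos lam + E"
  by (simp add: matrix_distribs sign_split_mult sign_split_mult_left)

lemma block_NYN: "N ** Y ** N = Lneg lam + F"
  by (simp add: matrix_distribs sign_split_mult sign_split_mult_left)

lemma block_NXP: "XNP = YNP + HO"
  by (subst Y_eq) (simp add: matrix_distribs sign_split_mult sign_split_mult_left)

lemma lower_bound_NP:
  assumes "N ** (T::real^'n^'n) ** P = T"
  shows "m * norm T \<le> norm (T ** Lpos lam + Lneg lam ** T)"
  unfolding Lpos_def Lneg_def
proof (rule norm_sylvester_lower_bound)
  fix i j assume "T$i$j \<noteq> 0"
  then have "lam i < 0" "0 < lam j"
    using sign_block_component(2)[of lam T i j] assms by (auto split: if_splits)
  then show "m \<le> \<bar>(if 0 < lam j then lam j else 0) + (if lam i < 0 then - lam i else 0)\<bar>"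
    using m_le_abs_lam[of j] m_pos by auto
qed (use m_pos in simp)

lemma lower_bound_Lneg:
  assumes "(T::real^'n^'n) ** N = T"
  shows "m * norm T \<le> norm (T ** Lneg lam)"
proof -
  have "m * norm T \<le> norm (T ** Lneg lam + diag_mat (\<lambda>_. 0) ** T)"
    unfolding Lneg_def
  proof (rule norm_sylvester_lower_bound)
    fix i j assume "T$i$j \<noteq> 0"
    then have "lam j < 0"
      using arg_cong[OF assms, of "\<lambda>M. M$i$j"]
      by (auto simp: Ineg_def mult_diag_mat_component split: if_splits)
    then show "m \<le> \<bar>(if lam j < 0 then - lam j else 0) + 0\<bar>" using m_le_abs_lam[of j] by auto
  qed (use m_pos in simp)
  then show ?thesis by (simp add: diag_mat_zero)
qed

lemma lower_bound_Lpos: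
  assumes "P ** (T::real^'n^'n) = T"
  shows "m * norm T \<le> norm (Lpos lam ** T)"
proof -
  have "m * norm T \<le> norm (T ** diag_mat (\<lambda>_. 0) + Lpos lam ** T)"
    unfolding Lpos_def
  proof (rule norm_sylvester_lower_bound)
    fix i j assume "T$i$j \<noteq> 0"
    then have "0 < lam i"
      using arg_cong[OF assms, of "\<lambda>M. M$i$j"]
      by (auto simp: Ipos_def diag_mat_mult_component split: if_splits)
    then show "m \<le> \<bar>0 + (if 0 < lam i then lam i else 0)\<bar>" using m_le_abs_lam[of i] by auto
  qed (use m_pos in simp)
  then show ?thesis by (simp add: diag_mat_zero)
qed

lemma H_small_mult: "8 * (norm H * norm T) \<le> m * norm (T::real^'n^'n)"
  using mult_right_mono[OF H_small norm_ge_zero, of T] by simp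

lemma NP_block_idem: "N ** (N ** M ** P) ** P = N ** M ** P"
  by (simp add: matrix_mul_assoc sign_split_mult sign_split_mult_left)

lemma sylvester_eq_YNP:
  "YNP ** Lpos lam + Lneg lam ** YNP = - (YNP ** E + F ** YNP + Lneg lam ** HO + F ** HO)"
proof -
  have "YNP ** (Lpos lam + E) + (Lneg lam + F) ** (YNP + HO) = 0"
    using block_zero_YX[of N P] by (simp only: block_PXP block_NYN block_NXP)
  then show ?thesis
    by (simp add: matrix_distribs algebra_simps eq_neg_iff_add_eq_0)
qed

lemma norm_YNP_le: "norm YNP \<le> \<kappa> * norm HO"
proof -
  have "m * norm YNP \<le> norm (YNP ** Lpos lam + Lneg lam ** YNP)"
    by (rule lower_bound_NP) (rule NP_block_idem)
  also have "\<dots> = norm (YNP ** E + F ** YNP + Lneg lam ** HO + F ** HO)"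
    by (simp only: sylvester_eq_YNP norm_minus_cancel)
  also have "\<dots> \<le> norm YNP * norm H + 2 * norm H * norm YNP + norm (Lneg lam) * norm HO
      + 2 * norm H * norm HO"
    by (intro norm_triangle_mono norm_matrix_mult_le_mult norm_E_le norm_F_le order_refl)
  finally have "m * norm YNP \<le> 3 * (norm H * norm YNP) + norm (Lneg lam) * norm HO
      + 2 * (norm H * norm HO)"
    by (simp add: algebra_simps)
  moreover have "0 \<le> norm (Lneg lam) * norm HO" "0 \<le> m * norm HO"
    using m_pos by simp_all
  ultimately have "m * norm YNP \<le> 2 * (norm (Lneg lam) * norm HO) + 2 * (m * norm HO)"
    using H_small_mult[of YNP] H_small_mult[of HO] by linarith
  then show ?thesis
    using m_pos by (simp add: kappa_def pos_le_divide_eq algebra_simps)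
qed

lemma transpose_NP_block: "transpose M = M \<Longrightarrow> transpose (N ** M ** P) = P ** M ** N"
  by (simp add: matrix_transpose_mul transpose_sign_split matrix_mul_assoc)

lemma norm_XNP_le: "norm XNP \<le> (\<kappa> + 1) * norm HO"
  using norm_triangle_ineq[of YNP HO] norm_YNP_le by (simp add: block_NXP algebra_simps)

lemma norm_XNP_mult_YNP_le: "norm XNP * norm YNP \<le> \<kappa> * (\<kappa> + 1) * (norm HO * norm H)"
proof -
  have "norm XNP * norm YNP \<le> ((\<kappa> + 1) * norm HO) * (\<kappa> * norm HO)"
    using norm_XNP_le norm_YNP_le kappa_nonneg by (intro mult_mono) auto
  also have "\<dots> = \<kappa> * (\<kappa> + 1) * (norm HO * norm HO)" by (simp add: algebra_simps)
  also have "\<dots> \<le> \<kappa> * (\<kappa> + 1) * (norm HO * norm H)"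
    using norm_HO_le kappa_nonneg by (intro mult_left_mono mult_nonneg_nonneg) auto
  finally show ?thesis .
qed

lemma norm_XNN_le: "m * norm (N ** X ** N) \<le> 2 * (\<kappa> * (\<kappa> + 1) * (norm HO * norm H))"
proof -
  have "XNP ** (P ** Y ** N) + (N ** X ** N) ** (Lneg lam + F) = 0"
    using block_zero_XY[of N N] by (simp only: block_NYN)
  then have eq: "(N ** X ** N) ** Lneg lam = - (XNP ** transpose YNP + (N ** X ** N) ** F)"
    unfolding transpose_NP_block[OF sym_Y] matrix_add_ldistrib
    by (simp add: algebra_simps eq_neg_iff_add_eq_0)
  have "m * norm (N ** X ** N) \<le> norm ((N ** X ** N) ** Lneg lam)"
    by (rule lower_bound_Lneg) (simp add: matrix_mul_assoc sign_split_mult sign_split_mult_left)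
  also have "\<dots> \<le> norm XNP * norm YNP + norm (N ** X ** N) * (2 * norm H)"
    unfolding eq norm_minus_cancel
    by (intro norm_triangle_mono norm_matrix_mult_le_mult norm_F_le order_refl)
       (simp add: norm_transpose)
  also have "\<dots> = norm XNP * norm YNP + 2 * (norm H * norm (N ** X ** N))"
    by (simp add: algebra_simps)
  moreover have "0 \<le> \<kappa> * (\<kappa> + 1) * (norm HO * norm H)"
    using kappa_nonneg by simp
  ultimately show ?thesis
    using H_small_mult[of "N ** X ** N"] norm_XNP_mult_YNP_le by linarith
qed

lemma norm_YPP_le: "m * norm (P ** Y ** P) \<le> 2 * (\<kappa> * (\<kappa> + 1) * (norm HO * norm H))"
proof -
  have "(Lpos lam + E) ** (P ** Y ** P) + (P ** X ** N) ** YNP = 0"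
    using block_zero_XY[of P P] by (simp only: block_PXP)
  then have eq: "Lpos lam ** (P ** Y ** P) = - (E ** (P ** Y ** P) + transpose XNP ** YNP)"
    unfolding transpose_NP_block[OF sym_X] matrix_add_rdistrib
    by (simp add: algebra_simps eq_neg_iff_add_eq_0)
  have "m * norm (P ** Y ** P) \<le> norm (Lpos lam ** (P ** Y ** P))"
    by (rule lower_bound_Lpos) (simp add: matrix_mul_assoc sign_split_mult)
  also have "\<dots> \<le> norm H * norm (P ** Y ** P) + norm XNP * norm YNP"
    unfolding eq norm_minus_cancel
    by (intro norm_triangle_mono norm_matrix_mult_le_mult norm_E_le order_refl)
       (simp add: norm_transpose)
  moreover have "0 \<le> \<kappa> * (\<kappa> + 1) * (norm HO * norm H)"
    using kappa_nonneg by simp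
  ultimately show ?thesis
    using H_small_mult[of "P ** Y ** P"] norm_XNP_mult_YNP_le by linarith
qed

lemma Theta_NP_block: "N ** Theta_hadamard lam H ** P = Theta_hadamard lam H"
  by (simp add: vec_eq_iff sign_block_component Theta_hadamard_def)

lemma norm_XNP_minus_Theta_le:
  "m * norm (XNP - Theta_hadamard lam H) \<le> (3 * \<kappa> + 2) * (norm HO * norm H)"
proof -
  let ?D = "XNP - Theta_hadamard lam H"
  have "?D ** Lpos lam + Lneg lam ** ?D
      = (YNP ** Lpos lam + Lneg lam ** YNP) + Lneg lam ** HO
        + (HO ** Lpos lam - (Theta_hadamard lam H ** Lpos lam + Lneg lam ** Theta_hadamard lam H))"
    unfolding block_NXP matrix_distribs by (simp add: algebra_simps)
  also have "\<dots> = - (YNP ** E + F ** YNP + F ** HO)"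
    unfolding sylvester_eq_YNP Theta_hadamard_sylvester[of lam H] by (simp add: algebra_simps)
  finally have eq: "?D ** Lpos lam + Lneg lam ** ?D = - (YNP ** E + F ** YNP + F ** HO)" .
  have "m * norm ?D \<le> norm (?D ** Lpos lam + Lneg lam ** ?D)"
    by (rule lower_bound_NP)
       (simp add: matrix_diff_ldistrib matrix_diff_rdistrib NP_block_idem Theta_NP_block)
  also have "\<dots> \<le> norm YNP * norm H + 2 * norm H * norm YNP + 2 * norm H * norm HO"
    unfolding eq norm_minus_cancel
    by (intro norm_triangle_mono norm_matrix_mult_le_mult norm_E_le norm_F_le order_refl)
  also have "\<dots> \<le> 3 * norm H * (\<kappa> * norm HO) + 2 * norm H * norm HO"
    using mult_left_mono[OF norm_YNP_le, of "norm H"] by (simp add: algebra_simps)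
  finally show ?thesis by (simp add: algebra_simps)
qed

lemma sym_H: "transpose H = H"
proof -
  have "H = X - Y - diag_mat lam" using X_minus_Y by (simp add: algebra_simps)
  then show ?thesis by (simp add: transpose_diff sym_X sym_Y transpose_diag_mat)
qed

text \<open>Blockwise: on the \<open>PP\<close> block \<open>X - Lpos lam - H = Y\<close> because
  \<open>X - Y = diag_mat lam + H\<close>, and \<open>Omega\<close> vanishes on the \<open>NN\<close> block.\<close>
lemma expansion_error_decomposition:
  "X - Lpos lam - Omega_hadamard lam H
     = P ** Y ** P + (XNP - Theta_hadamard lam H) + transpose (XNP - Theta_hadamard lam H)
       + N ** X ** N"
proof -
  have "(X - Lpos lam - Omega_hadamard lam H) $ i $ j
      = (P ** Y ** P + (XNP - Theta_hadamard lam H) + transpose (XNP - Theta_hadamard lam H)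
         + N ** X ** N) $ i $ j" for i j
  proof -
    have sym: "X$j$i = X$i$j" "H$j$i = H$i$j"
      using sym_X sym_H by (metis transpose_component)+
    have Y: "Y$i$j = X$i$j - (if i = j then lam i else 0) - H$i$j"
      using arg_cong[OF X_minus_Y, of "\<lambda>M. M$i$j"] by (simp add: diag_mat_component)
    show ?thesis
      using lam_nonzero[of i] lam_nonzero[of j]
      by (cases "0 < lam i"; cases "0 < lam j")
         (auto simp: sign_block_component Theta_hadamard_def Omega_hadamard_def Omega_def
           transpose_component Lpos_def diag_mat_component Y sym)
  qed
  then show ?thesis by (simp add: vec_eq_iff)
qed

lemma expansion_error_bound:
  "m * norm (X - Lpos lam - Omega_hadamard lam H)
     \<le> (4 * \<kappa> * (\<kappa> + 1) + 2 * (3 * \<kappa> + 2)) * (norm HO * norm H)"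
proof -
  have "norm (X - Lpos lam - Omega_hadamard lam H)
      \<le> norm (P ** Y ** P) + norm (XNP - Theta_hadamard lam H)
        + norm (XNP - Theta_hadamard lam H) + norm (N ** X ** N)"
    unfolding expansion_error_decomposition
    by (intro norm_triangle_mono order_refl) (simp add: norm_transpose)
  then have "m * norm (X - Lpos lam - Omega_hadamard lam H)
      \<le> m * norm (P ** Y ** P) + 2 * (m * norm (XNP - Theta_hadamard lam H))
        + m * norm (N ** X ** N)"
    using mult_left_mono[OF _ less_imp_le[OF m_pos]] by (fastforce simp: algebra_simps)
  then show ?thesis
    using norm_YPP_le norm_XNP_minus_Theta_le norm_XNN_le by (simp add: algebra_simps)
qed

end

section \<open>The expansion error of the projection near \<open>Z\<^sub>\<star>\<close>\<close>

lemma orthogonal_congruence_cancel: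
  assumes "orthogonal_matrix Q"
  shows "transpose Q ** (Q ** M ** transpose Q) ** Q = M"
    and "Q ** (transpose Q ** M ** Q) ** transpose Q = M"
  using assms unfolding orthogonal_matrix_def
  by (simp_all add: matrix_mul_assoc) (simp_all flip: matrix_mul_assoc)

lemma orthogonal_congruence_mult:
  assumes "orthogonal_matrix Q"
  shows "(transpose Q ** A ** Q) ** (transpose Q ** B ** Q) = transpose Q ** (A ** B) ** Q"
  using assms unfolding orthogonal_matrix_def
  by (simp add: matrix_mul_assoc) (simp flip: matrix_mul_assoc)

lemma psd_cone_diag_nonneg: "X \<in> psd_cone \<Longrightarrow> 0 \<le> X$i$i"
  using psd_cone_nonneg[of X "axis i 1"]
  by (simp add: inner_vec_def matrix_vector_mult_def axis_def if_distrib if_distribR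
      sum.delta cong: if_cong)

lemma Lpos_in_psd_cone: "Lpos lam \<in> psd_cone"
proof (rule psd_coneI)
  show "transpose (Lpos lam) = Lpos lam" by (rule transpose_sign_split)
  show "0 \<le> x \<bullet> (Lpos lam *v x)" for x
    unfolding Lpos_def diag_mat_quadratic_form by (intro sum_nonneg) auto
qed

lemma proj_psd_orthogonal_diag:
  fixes Q :: "real^'n^'n"
  assumes "orthogonal_matrix Q"
  shows "proj_psd (Q ** diag_mat lam ** transpose Q) = Q ** Lpos lam ** transpose Q"
proof (rule proj_psd_eqI)
  show "Q ** Lpos lam ** transpose Q \<in> psd_cone"
    using psd_cone_congruence[OF Lpos_in_psd_cone, of "transpose Q"] by simp
  fix W :: "real^'n^'n" assume W: "W \<in> psd_cone"
  have "Q ** diag_mat lam ** transpose Q - Q ** Lpos lam ** transpose Q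
      = - (Q ** Lneg lam ** transpose Q)"
    by (simp add: diag_mat_eq_Lpos_minus_Lneg matrix_diff_ldistrib matrix_diff_rdistrib)
  then have "(Q ** diag_mat lam ** transpose Q - Q ** Lpos lam ** transpose Q)
        \<bullet> (W - Q ** Lpos lam ** transpose Q)
      = Lneg lam \<bullet> Lpos lam - Lneg lam \<bullet> (transpose Q ** W ** Q)"
    using orthogonal_congruence_cancel(1)[OF assms, of "Lpos lam"]
    by (simp add: inner_diff_right inner_matrix_congruence)
  also have "Lneg lam \<bullet> Lpos lam = 0"
    unfolding Lneg_def inner_diag_mat by (intro sum.neutral) (simp add: Lpos_def diag_mat_component)
  also have "0 \<le> Lneg lam \<bullet> (transpose Q ** W ** Q)"
    unfolding Lneg_def inner_diag_mat
    using psd_cone_diag_nonneg[OF psd_cone_congruence[OF W, of Q]]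
    by (intro sum_nonneg) (simp add: mult_nonpos_nonneg)
  finally show "(Q ** diag_mat lam ** transpose Q - Q ** Lpos lam ** transpose Q)
      \<bullet> (W - Q ** Lpos lam ** transpose Q) \<le> 0" by simp
qed

lemma sum_Collect_eq_sum_if: "(\<Sum>x | P x. f x) = (\<Sum>x\<in>(UNIV::'a::finite set). if P x then f x else 0)"
  using sum.inter_filter[of "UNIV::'a set" f P] by simp

lemma HO_norm_eq_norm_block:
  "HO_norm Q lam H = norm (Ineg lam ** (transpose Q ** H ** Q) ** Ipos lam)"
proof -
  define Hh where "Hh = transpose Q ** H ** Q"
  have "(norm (Ineg lam ** Hh ** Ipos lam))\<^sup>2
      = (\<Sum>a\<in>UNIV. \<Sum>b\<in>UNIV. if lam a < 0 \<and> 0 < lam b then (Hh$a$b)\<^sup>2 else 0)"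
    unfolding power2_norm_matrix sign_block_component by (intro sum.cong refl) simp
  also have "\<dots> = (\<Sum>a | lam a < 0. \<Sum>b | 0 < lam b. (Hh$a$b)\<^sup>2)"
    unfolding sum_Collect_eq_sum_if
    by (intro sum.cong refl, rename_tac a, case_tac "lam a < 0") simp_all
  finally show ?thesis
    unfolding HO_norm_def Hh_def by (metis norm_ge_zero real_sqrt_abs abs_of_nonneg)
qed

lemma psd_split_perturbation_eigenbasis:
  fixes lam :: "'n::finite \<Rightarrow> real" and Q Z :: "real^'n^'n"
  assumes "\<And>i. lam i \<noteq> 0" "0 < m" "\<And>i. m \<le> \<bar>lam i\<bar>"
    and orth: "orthogonal_matrix Q" and sym_Z: "transpose Z = Z"
    and near: "norm (Z - Q ** diag_mat lam ** transpose Q) \<le> m / 8"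
  shows "psd_split_perturbation lam m (transpose Q ** proj_psd Z ** Q)
           (transpose Q ** (proj_psd Z - Z) ** Q)
           (transpose Q ** (Z - Q ** diag_mat lam ** transpose Q) ** Q)"
proof
  let ?Zs = "Q ** diag_mat lam ** transpose Q"
  have sym_proj: "transpose (proj_psd Z) = proj_psd Z"
    by (rule psd_cone_transpose[OF proj_psd_in_cone])
  show "transpose (transpose Q ** proj_psd Z ** Q) = transpose Q ** proj_psd Z ** Q"
    "transpose (transpose Q ** (proj_psd Z - Z) ** Q) = transpose Q ** (proj_psd Z - Z) ** Q"
    using sym_proj sym_Z by (simp_all add: matrix_transpose_mul transpose_diff matrix_mul_assoc)
  show "(transpose Q ** proj_psd Z ** Q) ** (transpose Q ** (proj_psd Z - Z) ** Q) = 0"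
    unfolding orthogonal_congruence_mult[OF orth]
    using proj_psd_complementarity[OF sym_Z] by simp
  show "transpose Q ** proj_psd Z ** Q - transpose Q ** (proj_psd Z - Z) ** Q
      = diag_mat lam + transpose Q ** (Z - ?Zs) ** Q"
    by (simp add: matrix_distribs orthogonal_congruence_cancel[OF orth])
  have "transpose Q ** proj_psd Z ** Q - Lpos lam = transpose Q ** (proj_psd Z - proj_psd ?Zs) ** Q"
    by (simp add: proj_psd_orthogonal_diag[OF orth] matrix_distribs
        orthogonal_congruence_cancel[OF orth])
  then show "norm (transpose Q ** proj_psd Z ** Q - Lpos lam)
      \<le> norm (transpose Q ** (Z - ?Zs) ** Q)"
    using proj_psd_lipschitz[of Z ?Zs] by (simp add: norm_orthogonal_congruence[OF orth])
  show "norm (transpose Q ** (Z - ?Zs) ** Q) \<le> m / 8"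
    using near by (simp add: norm_orthogonal_congruence[OF orth])
qed (use assms in auto)

lemma proj_psd_expansion_error:
  fixes lam :: "'n::finite \<Rightarrow> real" and Q :: "real^'n^'n"
  assumes lam_nonzero: "\<And>i. lam i \<noteq> 0" and orth: "orthogonal_matrix Q"
  defines "Zs \<equiv> Q ** diag_mat lam ** transpose Q"
  obtains \<delta> K where "0 < \<delta>" "0 < K"
    "\<And>Z. transpose Z = Z \<Longrightarrow> norm (Z - Zs) < \<delta> \<Longrightarrow>
       norm (proj_psd Z - proj_psd Zs - Dop Q lam (Z - Zs))
         \<le> K * HO_norm Q lam (Z - Zs) * norm (Z - Zs)"
proof -
  define m where "m = Min (range (\<lambda>i. \<bar>lam i\<bar>))"
  have m_pos: "0 < m"
    using Min_in[of "range (\<lambda>i. \<bar>lam i\<bar>)"] lam_nonzero by (auto simp: m_def)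
  have m_le: "m \<le> \<bar>lam i\<bar>" for i
    unfolding m_def by (rule Min_le) auto
  define K where
    "K = (4 * kappa lam m * (kappa lam m + 1) + 2 * (3 * kappa lam m + 2)) / m"
  have "0 \<le> kappa lam m" using m_pos by (simp add: kappa_def)
  then have "0 < K"
    unfolding K_def using m_pos by (intro divide_pos_pos add_nonneg_pos mult_nonneg_nonneg) auto
  moreover have "norm (proj_psd Z - proj_psd Zs - Dop Q lam (Z - Zs))
      \<le> K * HO_norm Q lam (Z - Zs) * norm (Z - Zs)"
    if sym_Z: "transpose Z = Z" and near: "norm (Z - Zs) < m / 8" for Z
  proof -
    define X where "X = transpose Q ** proj_psd Z ** Q"
    define H where "H = transpose Q ** (Z - Zs) ** Q"
    interpret psd_split_perturbation lam m X "transpose Q ** (proj_psd Z - Z) ** Q" H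
      unfolding X_def H_def Zs_def
      using lam_nonzero m_pos m_le orth sym_Z near[unfolded Zs_def]
      by (intro psd_split_perturbation_eigenbasis) auto
    have "proj_psd Z - proj_psd Zs - Dop Q lam (Z - Zs)
        = Q ** (X - Lpos lam - Omega_hadamard lam H) ** transpose Q"
      unfolding X_def H_def Zs_def Dop_def proj_psd_orthogonal_diag[OF orth]
      by (simp add: matrix_distribs orthogonal_congruence_cancel[OF orth] Omega_hadamard_def)
    then have "norm (proj_psd Z - proj_psd Zs - Dop Q lam (Z - Zs))
        = norm (X - Lpos lam - Omega_hadamard lam H)"
      by (simp add: norm_orthogonal_congruence'[OF orth])
    also have "\<dots> \<le> K * (norm HO * norm H)"
      using expansion_error_bound m_pos by (simp add: K_def field_simps)
    finally show ?thesis
      using norm_orthogonal_congruence[OF orth, of "Z - Zs"]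
      by (simp add: HO_norm_eq_norm_block H_def mult.assoc)
  qed
  ultimately show ?thesis
    using that[of "m / 8" K] m_pos by simp
qed

section \<open>The ADMM iteration\<close>

lemma sym_mat_Aadj: "\<forall>i. sym_mat (A i) \<Longrightarrow> transpose (Aadj A y) = Aadj A y"
  by (simp add: vec_eq_iff transpose_def Aadj_def sym_mat_def)

lemma sym_mat_admm_step:
  assumes "\<forall>i. sym_mat (A i)" "sym_mat C" "transpose Z = Z"
  shows "transpose (admm_step A b C \<sigma> Z) = admm_step A b C \<sigma> Z"
  using assms sym_mat_Aadj[OF assms(1)] psd_cone_transpose[OF proj_psd_in_cone[of Z]]
  by (simp add: admm_step_def Pop_def transpose_add transpose_diff transpose_scalar sym_mat_def)

lemma linear_Pop: "linear (Pop A)"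
proof -
  have "linear (Aop A)"
    by (rule linearI) (simp_all add: Aop_def vec_eq_iff inner_add_right)
  moreover have "linear (Aadj A)"
    by (rule linearI) (simp_all add: Aadj_def scaleR_add_left sum.distrib scaleR_sum_right)
  moreover have "Pop A = Aadj A \<circ> (\<lambda>v. matrix_inv (AAadj A) *v v) \<circ> Aop A"
    by (simp add: fun_eq_iff Pop_def)
  ultimately show ?thesis
    by (metis linear_compose matrix_vector_mul_linear)
qed

lemma reflection_Pop_bounded:
  fixes A :: "'m::finite \<Rightarrow> real^'n^'n"
  obtains c where "0 < c" "\<And>W. norm (W - 2 *\<^sub>R Pop A W) \<le> c * norm W"
proof -
  have "linear (\<lambda>W. W - 2 *\<^sub>R Pop A W)"
    by (rule linearI)
       (simp_all add: linear_add[OF linear_Pop] linear_scale[OF linear_Pop] algebra_simps)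
  then show ?thesis using linear_bounded_pos that by blast
qed

theorem proposition2:
  fixes lam :: "'n::{finite,linorder} \<Rightarrow> real"
    and A :: "'m::finite \<Rightarrow> ((real, 'n) vec, 'n) vec"
    and b :: "real^'m" and C :: "((real, 'n) vec, 'n) vec" and \<sigma> :: real
    and Z :: "nat \<Rightarrow> ((real, 'n) vec, 'n) vec"
    and Xs Ss :: "((real, 'n) vec, 'n) vec" and ys :: "real^'m"
    and Q :: "((real, 'n) vec, 'n) vec"
  assumes symC: "sym_mat C"
    and symA: "\<forall>i. sym_mat (A i)"
    and surjA: "\<forall>v. \<exists>X. sym_mat X \<and> Aop A X = v"
    and sigma_pos: "0 < \<sigma>"
    and symZ0: "sym_mat (Z 0)"
    and iter: "\<forall>k. Z (Suc k) = admm_step A b C \<sigma> (Z k)"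
    and kkt: "KKT A b C Xs ys Ss"
    and conv: "Z \<longlonglongrightarrow> Xs - \<sigma> *\<^sub>R Ss"
    and strict_compl: "rank Xs + rank Ss = card (UNIV :: 'n set)"
    and orthQ: "orthogonal_matrix Q"
    and eig: "Xs - \<sigma> *\<^sub>R Ss = Q ** diag_mat lam ** transpose Q"
    and sorted: "\<forall>i j. i \<le> j \<longrightarrow> lam j \<le> lam i"
    and pos: "card {i. 0 < lam i} = rank Xs"
    and nonzero: "\<forall>i. lam i \<noteq> 0"
  shows "\<exists>kbar::nat. \<exists>\<alpha>>0. \<forall>k\<ge>kbar.
           norm ((let Zst = Xs - \<sigma> *\<^sub>R Ss;
                      W = proj_psd (Z k) - proj_psd Zst - Dop Q lam (Z k - Zst)
                  in W - 2 *\<^sub>R Pop A W))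
           \<le> \<alpha> * HO_norm Q lam (Z k - (Xs - \<sigma> *\<^sub>R Ss)) * norm (Z k - (Xs - \<sigma> *\<^sub>R Ss))"
proof -
  define Zs where "Zs = Xs - \<sigma> *\<^sub>R Ss"
  obtain \<delta> K where "0 < \<delta>" "0 < K" and expansion:
    "\<And>Z. transpose Z = Z \<Longrightarrow> norm (Z - Zs) < \<delta> \<Longrightarrow>
       norm (proj_psd Z - proj_psd Zs - Dop Q lam (Z - Zs))
         \<le> K * HO_norm Q lam (Z - Zs) * norm (Z - Zs)"
    using proj_psd_expansion_error[of lam Q] nonzero orthQ unfolding Zs_def eig by blast
  obtain c where "0 < c" and reflection: "\<And>W. norm (W - 2 *\<^sub>R Pop A W) \<le> c * norm W"
    using reflection_Pop_bounded[of A] by blast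
  obtain kbar where near: "\<And>k. kbar \<le> k \<Longrightarrow> norm (Z k - Zs) < \<delta>"
    using conv \<open>0 < \<delta>\<close> unfolding LIMSEQ_iff Zs_def by blast
  have sym: "transpose (Z k) = Z k" for k
    by (induction k) (use symZ0 iter sym_mat_admm_step[OF symA symC] in \<open>auto simp: sym_mat_def\<close>)
  have "norm (W - 2 *\<^sub>R Pop A W) \<le> c * K * HO_norm Q lam (Z k - Zs) * norm (Z k - Zs)"
    if "kbar \<le> k" "W = proj_psd (Z k) - proj_psd Zs - Dop Q lam (Z k - Zs)" for k W
  proof -
    have "norm (W - 2 *\<^sub>R Pop A W) \<le> c * norm W" by (rule reflection)
    also have "\<dots> \<le> c * (K * HO_norm Q lam (Z k - Zs) * norm (Z k - Zs))"
      using expansion[OF sym near[OF that(1)]] \<open>0 < c\<close> that(2) by (intro mult_left_mono) auto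
    finally show ?thesis by (simp add: mult.assoc)
  qed
  then show ?thesis
    using \<open>0 < c\<close> \<open>0 < K\<close> unfolding Let_def Zs_def[symmetric] by (metis mult_pos_pos)
qed

end
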